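(* Let $c$ be a real number with $0<c\leq 1/2$. There exists a sequence $(a_p)$ indexed by the prime numbers $p$, with each $a_p$ an integer satisfying $0\leq a_p<p$, such that for almost every $x\in[0,1]$ (with respect to Lebesgue measure), the set of primes $p$ with $$\Bigl|x-\frac{a_p}{p}\Bigr|\leq \frac{c}{p}$$ is infinite. *)

theory Defs
  imports "HOL-Analysis.Analysis" "HOL-Computational_Algebra.Primes"
begin

end

(*
  The series of prime reciprocals diverges (Erdos's counting argument), so the primes split into
  consecutive blocks with arbitrarily large sums of 1/p.  A block with sum at least (v - u) / (2c)
  nearly covers an interval [u, v] greedily: each prime p in turn puts its arc
  [(a - c)/p, (a + c)/p] as far left as possible, leaving a gap shorter than 1/p next to an
  arc of length 2c/p, so all gaps together have length at most (v - u) / (1 + 2c) plus a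
  boundary error of order 1/N.  Applying this to every interval of a finite union shrinks its
  total length by the factor 1 / (1 + 2c), so finitely many blocks cover [0, 1] up to a set of
  arbitrarily small measure.  Gluing infinitely many such groups of blocks, the points lying in
  only finitely many arcs are contained in sets of arbitrarily small measure, hence form a null set.
*)

theory Submission
  imports Defs "HOL-Computational_Algebra.Squarefree"
begin

definition prime_recip_sum :: "nat \<Rightarrow> nat \<Rightarrow> real" where
  "prime_recip_sum N M = (\<Sum>p | prime p \<and> N \<le> p \<and> p < M. 1 / real p)"

lemma finite_primes_between: "finite {p :: nat. prime p \<and> N \<le> p \<and> p < M}"
  by (rule finite_subset[of _ "{..<M}"]) auto

lemma prime_recip_sum_nonneg: "0 \<le> prime_recip_sum N M"
  unfolding prime_recip_sum_def by (rule sum_nonneg) simp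

lemma prime_recip_sum_empty: "M \<le> N \<Longrightarrow> prime_recip_sum N M = 0"
  unfolding prime_recip_sum_def by (rule sum.neutral) auto

lemma prime_recip_sum_split:
  assumes "N \<le> K" "K \<le> M"
  shows "prime_recip_sum N M = prime_recip_sum N K + prime_recip_sum K M"
proof -
  have "{p. prime p \<and> N \<le> p \<and> p < M} =
      {p. prime p \<and> N \<le> p \<and> p < K} \<union> {p. prime p \<and> K \<le> p \<and> p < M}"
    using assms by auto
  then show ?thesis
    unfolding prime_recip_sum_def
    by (simp add: finite_primes_between sum.union_disjoint disjoint_iff)
qed

lemma prime_recip_sum_Suc:
  assumes "N < M"
  shows "prime_recip_sum N M = (if prime N then 1 / real N else 0) + prime_recip_sum (Suc N) M"
proof -
  have "prime_recip_sum N (Suc N) = (if prime N then 1 / real N else 0)"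
  proof -
    have "{p. prime p \<and> N \<le> p \<and> p < Suc N} = (if prime N then {N} else {})"
      by (auto simp: less_Suc_eq_le)
    then show ?thesis by (simp add: prime_recip_sum_def)
  qed
  then show ?thesis using prime_recip_sum_split[of N "Suc N" M] assms by simp
qed

lemma card_multiples_le: "card {n \<in> {1..X}. p dvd n} \<le> X div (p :: nat)"
proof -
  have "{n \<in> {1..X}. p dvd n} \<subseteq> (\<lambda>k. p * k) ` {1..X div p}"
  proof
    fix n assume "n \<in> {n \<in> {1..X}. p dvd n}"
    then obtain k where k: "n = p * k" "1 \<le> n" "n \<le> X" by auto
    then have "p > 0" "1 \<le> k" by (auto simp: Suc_le_eq)
    then have "k \<le> X div p" using div_le_mono[of "p * k" X p] k by simp
    with k show "n \<in> (\<lambda>k. p * k) ` {1..X div p}" by auto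
  qed
  then have "card {n \<in> {1..X}. p dvd n} \<le> card ((\<lambda>k. p * k) ` {1..X div p})"
    by (intro card_mono) auto
  also have "\<dots> \<le> X div p" using card_image_le[of "{1..X div p}" "\<lambda>k. p * k"] by simp
  finally show ?thesis .
qed

lemma squarefree_eq_if_prime_factors_eq:
  fixes m n :: nat
  assumes "squarefree m" "squarefree n" "prime_factors m = prime_factors n"
  shows "m = n"
proof -
  have nonzero: "m \<noteq> 0" "n \<noteq> 0" using assms(1,2) not_squarefree_0 by metis+
  have multiplicity: "multiplicity q k = (if q \<in> prime_factors k then 1 else 0)"
    if "squarefree k" "k \<noteq> 0" "prime q" for q k :: nat
    using that squarefree_factorial_semiring''[of k] prime_factors_multiplicity[of k]
    by (auto simp: le_Suc_eq)
  have "normalize m = normalize n"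
    using nonzero assms by (intro multiplicity_eq_imp_eq) (simp_all add: multiplicity)
  then show ?thesis by simp
qed

text \<open>Such a number is determined by its square part (at most \<open>m\<close>) and by the primes dividing
  its squarefree part (a subset of \<open>{..<N}\<close>).\<close>

lemma card_smooth_le:
  "card {n \<in> {1..m\<^sup>2}. \<forall>p \<in> prime_factors n. p < N} \<le> 2 ^ N * m"
proof -
  define S where "S = {n \<in> {1..m\<^sup>2}. \<forall>p \<in> prime_factors n. p < N}"
  define g where "g n = (prime_factors (squarefree_part n), square_part n)" for n :: nat
  have "inj_on g S"
  proof (rule inj_onI)
    fix k l assume "g k = g l"
    then have square: "square_part k = square_part l"
      and factors: "prime_factors (squarefree_part k) = prime_factors (squarefree_part l)"
      by (simp_all add: g_def)
    from factors have "squarefree_part k = squarefree_part l"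
      by (intro squarefree_eq_if_prime_factors_eq) simp_all
    with square show "k = l" by (rule squarefree_decomposition_unique)
  qed
  moreover have "g ` S \<subseteq> Pow {..<N} \<times> {1..m}"
  proof
    fix y assume "y \<in> g ` S"
    then obtain n where n: "1 \<le> n" "n \<le> m\<^sup>2" "\<forall>p \<in> prime_factors n. p < N" and y: "y = g n"
      by (auto simp: S_def)
    have "(square_part n)\<^sup>2 \<le> n" using n(1) by (intro dvd_imp_le) auto
    then have "square_part n \<le> m" using n(2) power2_le_imp_le[of "square_part n" m] by linarith
    moreover have "squarefree_part n dvd n" by (metis dvd_triv_left squarefree_decompose)
    then have "prime_factors (squarefree_part n) \<subseteq> prime_factors n"
      using n(1) by (auto simp: in_prime_factors_iff intro: dvd_trans)
    moreover have "1 \<le> square_part n"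
      using n(1) square_part_0_iff[of n] by (metis less_one not_le)
    ultimately show "y \<in> Pow {..<N} \<times> {1..m}" using n(3) y by (auto simp: g_def)
  qed
  ultimately have "card S \<le> card (Pow {..<N} \<times> {1..m})"
    by (intro card_inj_on_le) auto
  also have "\<dots> = 2 ^ N * m" by (simp add: card_cartesian_product card_Pow)
  finally show ?thesis unfolding S_def .
qed

lemma card_with_large_prime_factor_le:
  "real (card {n \<in> {1..X}. \<exists>p. prime p \<and> N \<le> p \<and> p dvd n}) \<le> real X * prime_recip_sum N (Suc X)"
proof -
  define R where "R = {n \<in> {1..X}. \<exists>p. prime p \<and> N \<le> p \<and> p dvd n}"
  define P where "P = {p. prime p \<and> N \<le> p \<and> p < Suc X}"
  have "finite P" unfolding P_def by (rule finite_primes_between)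
  have "R \<subseteq> (\<Union>p\<in>P. {n \<in> {1..X}. p dvd n})"
  proof
    fix n assume "n \<in> R"
    then obtain p where "prime p" "N \<le> p" "p dvd n" "1 \<le> n" "n \<le> X" by (auto simp: R_def)
    moreover from this have "p \<le> X" using dvd_imp_le[of p n] by simp
    ultimately show "n \<in> (\<Union>p\<in>P. {n \<in> {1..X}. p dvd n})" by (auto simp: P_def)
  qed
  then have "card R \<le> card (\<Union>p\<in>P. {n \<in> {1..X}. p dvd n})"
    using \<open>finite P\<close> by (intro card_mono) auto
  also have "\<dots> \<le> (\<Sum>p\<in>P. card {n \<in> {1..X}. p dvd n})"
    using \<open>finite P\<close> by (rule card_UN_le)
  also have "\<dots> \<le> (\<Sum>p\<in>P. X div p)" by (intro sum_mono card_multiples_le)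
  finally have "real (card R) \<le> (\<Sum>p\<in>P. real (X div p))"
    by (simp only: of_nat_sum[symmetric] of_nat_le_iff)
  also have "\<dots> \<le> (\<Sum>p\<in>P. real X / real p)"
    by (intro sum_mono of_nat_div_le_of_nat)
  also have "\<dots> = real X * prime_recip_sum N (Suc X)"
    by (simp add: prime_recip_sum_def P_def sum_distrib_left)
  finally show ?thesis unfolding R_def .
qed

text \<open>Erdos: at most half of the numbers up to \<open>X = 4^(N+1)\<close> have all prime factors below \<open>N\<close>,
  and the others number at most \<open>X \<Sum> 1/p\<close> over the primes \<open>N \<le> p \<le> X\<close>.\<close>

lemma prime_recip_sum_ge_half: "\<exists>M. 1 / 2 \<le> prime_recip_sum N M"
proof -
  define m :: nat where "m = 2 ^ Suc N"
  define X where "X = m\<^sup>2"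
  define smooth where "smooth = {n \<in> {1..X}. \<forall>p \<in> prime_factors n. p < N}"
  define rough where "rough = {n \<in> {1..X}. \<exists>p. prime p \<and> N \<le> p \<and> p dvd n}"
  have "{1..X} \<subseteq> smooth \<union> rough"
    by (auto simp: smooth_def rough_def in_prime_factors_iff not_less)
  then have "card {1..X} \<le> card (smooth \<union> rough)"
    by (intro card_mono) (auto simp: smooth_def rough_def)
  also have "\<dots> \<le> card smooth + card rough" by (rule card_Un_le)
  finally have "X \<le> card smooth + card rough" by simp
  moreover have "2 * card smooth \<le> X"
    using card_smooth_le[of m N] by (simp add: smooth_def X_def m_def power2_eq_square)
  ultimately have "real X \<le> 2 * real (card rough)" by linarith
  also have "\<dots> \<le> 2 * (real X * prime_recip_sum N (Suc X))"
    unfolding rough_def by (intro mult_left_mono card_with_large_prime_factor_le) simp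
  finally have "real X * 1 \<le> real X * (2 * prime_recip_sum N (Suc X))" by simp
  moreover have "0 < real X" by (simp add: X_def m_def)
  ultimately show ?thesis by (intro exI[of _ "Suc X"]) (simp add: mult_le_cancel_left_pos)
qed

lemma prime_recip_sum_unbounded: "\<exists>M \<ge> N. T \<le> prime_recip_sum N M"
proof -
  have half_steps: "\<exists>M \<ge> N. real k / 2 \<le> prime_recip_sum N M" for k
  proof (induction k arbitrary: N)
    case 0
    then show ?case using prime_recip_sum_nonneg by auto
  next
    case (Suc k)
    obtain K where K: "N \<le> K" "real k / 2 \<le> prime_recip_sum N K" using Suc.IH by blast
    obtain M where M: "1 / 2 \<le> prime_recip_sum K M" using prime_recip_sum_ge_half by blast
    then have "K \<le> M" using prime_recip_sum_empty[of M K] by (cases "K \<le> M") auto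
    with K M show ?case
      by (intro exI[of _ M]) (auto simp: prime_recip_sum_split[of N K M])
  qed
  obtain k :: nat where "2 * T \<le> real k" using real_arch_simple by blast
  moreover obtain M where "N \<le> M" "real k / 2 \<le> prime_recip_sum N M" using half_steps by blast
  ultimately show ?thesis by (intro exI[of _ M]) auto
qed

definition admissible :: "(nat \<Rightarrow> int) \<Rightarrow> bool" where
  "admissible a \<longleftrightarrow> (\<forall>p. prime p \<longrightarrow> 0 \<le> a p \<and> a p < int p)"

definition covered :: "real \<Rightarrow> (nat \<Rightarrow> int) \<Rightarrow> nat \<Rightarrow> nat \<Rightarrow> real set" where
  "covered c a N M =
     {x. \<exists>p. prime p \<and> N \<le> p \<and> p < M \<and> \<bar>x - real_of_int (a p) / real p\<bar> \<le> c / real p}"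

definition reducible :: "real \<Rightarrow> nat \<Rightarrow> nat \<Rightarrow> real set \<Rightarrow> real set \<Rightarrow> bool" where
  "reducible c N M S T \<longleftrightarrow> (\<exists>a. admissible a \<and> S - covered c a N M \<subseteq> T)"

lemma admissible_zero: "admissible (\<lambda>_. 0)"
  by (simp add: admissible_def prime_gt_0_nat)

lemma covered_mono: "N' \<le> N \<Longrightarrow> M \<le> M' \<Longrightarrow> covered c a N M \<subseteq> covered c a N' M'"
  unfolding covered_def by (blast intro: order.trans less_le_trans)

lemma covered_cong:
  "(\<And>p. N \<le> p \<Longrightarrow> p < M \<Longrightarrow> a p = b p) \<Longrightarrow> covered c a N M = covered c b N M"
  unfolding covered_def by (intro Collect_cong ex_cong1) auto

lemma reducible_subset: "S \<subseteq> T \<Longrightarrow> reducible c N M S T"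
  unfolding reducible_def using admissible_zero by blast

lemma reducible_mono:
  assumes "reducible c N M S T" "N' \<le> N" "M \<le> M'" "S' \<subseteq> S" "T \<subseteq> T'"
  shows "reducible c N' M' S' T'"
  using assms covered_mono[OF assms(2,3)] unfolding reducible_def by blast

lemma reducible_Un_right: "reducible c N M S T \<Longrightarrow> reducible c N M (S \<union> R) (T \<union> R)"
  unfolding reducible_def by blast

lemma reducible_single_prime:
  assumes "prime p" "0 \<le> b" "b < int p"
  shows "reducible c p (Suc p) S (S - {x. \<bar>x - real_of_int b / real p\<bar> \<le> c / real p})"
proof -
  have "admissible ((\<lambda>_. 0)(p := b))"
    using assms admissible_zero by (simp add: admissible_def)
  moreover have "x \<in> covered c ((\<lambda>_. 0)(p := b)) p (Suc p)"
    if "\<bar>x - real_of_int b / real p\<bar> \<le> c / real p" for x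
    using that assms(1) by (auto simp: covered_def)
  ultimately show ?thesis unfolding reducible_def by blast
qed

lemma covered_splice:
  assumes "N \<le> K" "K \<le> M"
  shows "covered c a N K \<union> covered c b K M \<subseteq> covered c (\<lambda>p. if p < K then a p else b p) N M"
proof -
  let ?ab = "\<lambda>p. if p < K then a p else b p"
  have "covered c a N K = covered c ?ab N K" "covered c b K M = covered c ?ab K M"
    by (auto intro!: covered_cong)
  then show ?thesis using assms covered_mono[of N N K M] covered_mono[of N K M M] by auto
qed

lemma admissible_splice:
  "admissible a \<Longrightarrow> admissible b \<Longrightarrow> admissible (\<lambda>p. if p < K then a p else b p)"
  by (simp add: admissible_def)

lemma reducible_trans:
  assumes "reducible c N K S T" "reducible c K M T U" "N \<le> K" "K \<le> M"
  shows "reducible c N M S U"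
proof -
  obtain a b where "admissible a" "S - covered c a N K \<subseteq> T"
    and "admissible b" "T - covered c b K M \<subseteq> U"
    using assms(1,2) unfolding reducible_def by blast
  moreover have "S - covered c (\<lambda>p. if p < K then a p else b p) N M \<subseteq> U"
    using calculation covered_splice[OF assms(3,4), of c a b] by blast
  ultimately show ?thesis unfolding reducible_def by (blast intro: admissible_splice)
qed

lemma reducible_Un:
  assumes "reducible c N K S T" "reducible c K M S' T'" "N \<le> K" "K \<le> M"
  shows "reducible c N M (S \<union> S') (T \<union> T')"
proof -
  obtain a b where "admissible a" "S - covered c a N K \<subseteq> T"
    and "admissible b" "S' - covered c b K M \<subseteq> T'"
    using assms(1,2) unfolding reducible_def by blast
  moreover have "(S \<union> S') - covered c (\<lambda>p. if p < K then a p else b p) N M \<subseteq> T \<union> T'"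
    using calculation covered_splice[OF assms(3,4), of c a b] by blast
  ultimately show ?thesis unfolding reducible_def by (blast intro: admissible_splice)
qed

definition intervals_union :: "(real \<times> real) list \<Rightarrow> real set" where
  "intervals_union Is = (\<Union>(u, v) \<in> set Is. {u..v})"

definition intervals_length :: "(real \<times> real) list \<Rightarrow> real" where
  "intervals_length Is = (\<Sum>(u, v) \<leftarrow> Is. v - u)"

definition intervals_in_unit :: "(real \<times> real) list \<Rightarrow> bool" where
  "intervals_in_unit Is \<longleftrightarrow> (\<forall>(u, v) \<in> set Is. 0 \<le> u \<and> u \<le> v \<and> v \<le> 1)"

lemma intervals_union_simps [simp]:
  "intervals_union [] = {}"
  "intervals_union ((u, v) # Is) = {u..v} \<union> intervals_union Is"
  "intervals_union (Is @ Js) = intervals_union Is \<union> intervals_union Js"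
  by (auto simp: intervals_union_def)

lemma intervals_length_simps [simp]:
  "intervals_length [] = 0"
  "intervals_length ((u, v) # Is) = (v - u) + intervals_length Is"
  "intervals_length (Is @ Js) = intervals_length Is + intervals_length Js"
  by (simp_all add: intervals_length_def)

lemma intervals_in_unit_simps [simp]:
  "intervals_in_unit []"
  "intervals_in_unit ((u, v) # Is) \<longleftrightarrow> 0 \<le> u \<and> u \<le> v \<and> v \<le> 1 \<and> intervals_in_unit Is"
  "intervals_in_unit (Is @ Js) \<longleftrightarrow> intervals_in_unit Is \<and> intervals_in_unit Js"
  by (auto simp: intervals_in_unit_def)

lemma intervals_union_lmeasurable:
  assumes "\<And>u v. (u, v) \<in> set Is \<Longrightarrow> u \<le> v"
  shows "intervals_union Is \<in> lmeasurable \<and> measure lebesgue (intervals_union Is) \<le> intervals_length Is"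
  using assms
proof (induction Is)
  case Nil
  then show ?case by simp
next
  case (Cons uv Is)
  obtain u v where uv: "uv = (u, v)" by fastforce
  with Cons have "u \<le> v" and IH: "intervals_union Is \<in> lmeasurable"
      "measure lebesgue (intervals_union Is) \<le> intervals_length Is"
    by auto
  have "measure lebesgue ({u..v} \<union> intervals_union Is) \<le> measure lebesgue {u..v} + measure lebesgue (intervals_union Is)"
    using IH(1) by (intro measure_Un_le) auto
  also have "\<dots> \<le> (v - u) + intervals_length Is" using IH(2) \<open>u \<le> v\<close> by simp
  finally show ?case using IH(1) uv by auto
qed

text \<open>The arc of the prime \<open>p\<close> is placed as far left in \<open>[u, v]\<close> as an integer numerator
  allows, so the gap it leaves is shorter than \<open>1/p\<close> while the arc itself has length \<open>2c/p\<close>.\<close>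

lemma reducible_by_one_arc:
  assumes "prime p" "0 < c" "0 \<le> u" "u + (1 + 2 * c) / p < v" "v \<le> 1"
  obtains l r where "u \<le> l" "l \<le> r" "r < v" "2 * c / p \<le> r - u" "l - u \<le> (r - u) / (1 + 2 * c)"
    and "reducible c p (Suc p) {u..v} ({u..l} \<union> {r..v})"
proof -
  define b where "b = \<lceil>real p * u + c\<rceil>"
  define l where "l = (real_of_int b - c) / p"
  define r where "r = (real_of_int b + c) / p"
  have p: "0 < real p" using assms(1) prime_gt_0_nat by simp
  have b: "real p * u + c \<le> b" "b < real p * u + c + 1"
    unfolding b_def by linarith+
  have "u \<le> l" using b p by (simp add: l_def field_simps)
  have "l - u < 1 / p"
  proof -
    have "l - u = (real_of_int b - c - real p * u) / p" using p by (simp add: l_def field_simps)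
    also have "\<dots> < 1 / p" using b p by (intro divide_strict_right_mono) auto
    finally show ?thesis .
  qed
  have "r - l = 2 * c / p" by (simp add: l_def r_def diff_divide_distrib[symmetric])
  moreover have "0 \<le> 2 * c / p" using assms(2) by simp
  moreover have "(l - u) * (1 + 2 * c) \<le> r - u"
  proof -
    have "2 * c * (l - u) \<le> 2 * c * (1 / p)"
      using \<open>l - u < 1 / p\<close> assms(2) by (intro mult_left_mono) auto
    then show ?thesis using \<open>r - l = 2 * c / p\<close> by (simp add: algebra_simps)
  qed
  then have "l - u \<le> (r - u) / (1 + 2 * c)" using assms(2) by (simp add: field_simps)
  moreover have "r < v"
    using \<open>l - u < 1 / p\<close> \<open>r - l = 2 * c / p\<close> assms(4) by (simp add: add_divide_distrib)
  moreover have "reducible c p (Suc p) {u..v} ({u..l} \<union> {r..v})"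
  proof -
    have "0 \<le> real p * u" using p assms(3) by simp
    then have "0 < real_of_int b" using b assms(2) by linarith
    moreover have "real_of_int b + c = real p * r" using p by (simp add: r_def)
    moreover have "real p * r < real p * 1"
      using \<open>r < v\<close> assms(5) p by (intro mult_strict_left_mono) auto
    ultimately have "0 \<le> b" "real_of_int b < real_of_int (int p)" using assms(2) by simp_all
    then have "0 \<le> b" "b < int p" by (simp_all only: of_int_less_iff)
    moreover have "{u..v} - {x. \<bar>x - real_of_int b / p\<bar> \<le> c / p} \<subseteq> {u..l} \<union> {r..v}"
      using p by (auto simp: l_def r_def abs_le_iff field_simps)
    ultimately show ?thesis
      using reducible_single_prime[OF assms(1)] by (blast intro: reducible_mono)
  qed
  ultimately show ?thesis using \<open>u \<le> l\<close> by (intro that[of l r]) auto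
qed

lemma interval_reducible:
  assumes c: "0 < c" "c \<le> 1 / 2"
    and "N \<le> M" "1 \<le> N" "0 \<le> u" "u \<le> v" "v \<le> 1" "v - u \<le> 2 * c * prime_recip_sum N M"
  shows "\<exists>Is. intervals_in_unit Is \<and> intervals_length Is \<le> (v - u) / (1 + 2 * c) + 2 / N \<and>
    reducible c N M {u..v} (intervals_union Is)"
  using assms(3-)
proof (induction N arbitrary: u rule: inc_induct)
  case base
  then have "u = v" using prime_recip_sum_empty[of M M] by simp
  then show ?case using base by (intro exI[of _ "[(u, v)]"]) (simp add: reducible_subset)
next
  case (step n)
  have sum_split: "prime_recip_sum n M = (if prime n then 1 / n else 0) + prime_recip_sum (Suc n) M"
    using step.hyps(2) by (rule prime_recip_sum_Suc)
  have error_mono: "2 / real (Suc n) \<le> 2 / n" using step.prems(1) by (intro divide_left_mono) auto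
  consider (composite) "\<not> prime n" | (short) "prime n" "v - u \<le> (1 + 2 * c) / n"
    | (long) "prime n" "u + (1 + 2 * c) / n < v"
    by linarith
  then show ?case
  proof cases
    case composite
    then obtain Is where Is: "intervals_in_unit Is" "reducible c (Suc n) M {u..v} (intervals_union Is)"
        "intervals_length Is \<le> (v - u) / (1 + 2 * c) + 2 / Suc n"
      using step.IH[of u] step.prems sum_split by auto
    have "reducible c n M {u..v} (intervals_union Is)" by (rule reducible_mono[OF Is(2)]) auto
    then show ?thesis using Is(1,3) error_mono by (intro exI[of _ Is]) auto
  next
    case short
    have "(1 + 2 * c) / n \<le> 2 / n" using c by (intro divide_right_mono) auto
    moreover have "0 \<le> (v - u) / (1 + 2 * c)" using c step.prems by simp
    ultimately show ?thesis
      using short step.prems by (intro exI[of _ "[(u, v)]"]) (auto simp: reducible_subset)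
  next
    case long
    obtain l r where lr: "u \<le> l" "l \<le> r" "r < v" "2 * c / n \<le> r - u"
        "l - u \<le> (r - u) / (1 + 2 * c)"
      and arc: "reducible c n (Suc n) {u..v} ({u..l} \<union> {r..v})"
      using reducible_by_one_arc[OF long(1) c(1) step.prems(2) long(2) step.prems(4)] .
    have "v - r \<le> 2 * c * prime_recip_sum (Suc n) M"
      using lr(4) step.prems(5) sum_split long(1) by (simp add: algebra_simps)
    then obtain Is where Is: "intervals_in_unit Is" "reducible c (Suc n) M {r..v} (intervals_union Is)"
        "intervals_length Is \<le> (v - r) / (1 + 2 * c) + 2 / Suc n"
      using step.IH[of r] step.prems lr(1-3) by auto
    have "reducible c (Suc n) M ({u..l} \<union> {r..v}) ({u..l} \<union> intervals_union Is)"
      using reducible_Un_right[OF Is(2), of "{u..l}"] by (simp add: Un_commute)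
    with arc have "reducible c n M {u..v} ({u..l} \<union> intervals_union Is)"
      by (rule reducible_trans) (use step.hyps(2) in auto)
    moreover have "intervals_length ((u, l) # Is) \<le> (r - u) / (1 + 2 * c) + (v - r) / (1 + 2 * c) + 2 / Suc n"
      using lr(5) Is(3) by simp
    then have "intervals_length ((u, l) # Is) \<le> (v - u) / (1 + 2 * c) + 2 / n"
      using error_mono by (simp add: add_divide_distrib[symmetric])
    moreover have "intervals_in_unit ((u, l) # Is)" using Is(1) lr step.prems by simp
    ultimately show ?thesis by (intro exI[of _ "(u, l) # Is"]) simp
  qed
qed

lemma intervals_reducible:
  assumes c: "0 < c" "c \<le> 1 / 2" and "intervals_in_unit Is" "0 < \<eta>"
  shows "\<exists>M \<ge> N. \<exists>Js. intervals_in_unit Js \<and>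
    intervals_length Js \<le> intervals_length Is / (1 + 2 * c) + \<eta> \<and>
    reducible c N M (intervals_union Is) (intervals_union Js)"
  using assms(3,4)
proof (induction Is arbitrary: N \<eta>)
  case Nil
  then show ?case by (intro exI[of _ N] conjI exI[of _ "[]"]) (simp_all add: reducible_subset)
next
  case (Cons uv Is)
  obtain u v where uv: "uv = (u, v)" by fastforce
  with Cons.prems have "0 \<le> u" "u \<le> v" "v \<le> 1" "intervals_in_unit Is" by auto
  obtain n :: nat where "4 / \<eta> < n" using reals_Archimedean2 by blast
  define K where "K = max N n"
  have "N \<le> K" "4 / \<eta> < K" using \<open>4 / \<eta> < n\<close> by (auto simp: K_def)
  moreover have "0 < 4 / \<eta>" using Cons.prems(2) by simp
  ultimately have "0 < real K" by linarith
  have "4 < \<eta> * K" using \<open>4 / \<eta> < K\<close> Cons.prems(2) by (simp add: field_simps)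
  then have "2 / K \<le> \<eta> / 2" using \<open>0 < real K\<close> by (simp add: field_simps)
  have "1 \<le> K" using \<open>0 < real K\<close> by simp
  obtain L where "K \<le> L" "(v - u) / (2 * c) \<le> prime_recip_sum K L"
    using prime_recip_sum_unbounded by blast
  then have "v - u \<le> 2 * c * prime_recip_sum K L" using c by (simp add: field_simps)
  then obtain Is1 where Is1: "intervals_in_unit Is1" "reducible c K L {u..v} (intervals_union Is1)"
      "intervals_length Is1 \<le> (v - u) / (1 + 2 * c) + 2 / K"
    using interval_reducible[OF c \<open>K \<le> L\<close> \<open>1 \<le> K\<close> \<open>0 \<le> u\<close> \<open>u \<le> v\<close> \<open>v \<le> 1\<close>]
    by blast
  obtain M Js2 where "L \<le> M" and Js2: "intervals_in_unit Js2"
      "reducible c L M (intervals_union Is) (intervals_union Js2)"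
      "intervals_length Js2 \<le> intervals_length Is / (1 + 2 * c) + \<eta> / 2"
    using Cons.IH[OF \<open>intervals_in_unit Is\<close>, of "\<eta> / 2" L] Cons.prems(2) by auto
  have "reducible c N L {u..v} (intervals_union Is1)"
    by (rule reducible_mono[OF Is1(2)]) (use \<open>N \<le> K\<close> in auto)
  from this Js2(2) have "reducible c N M (intervals_union (uv # Is)) (intervals_union (Is1 @ Js2))"
    using \<open>N \<le> K\<close> \<open>K \<le> L\<close> \<open>L \<le> M\<close> uv by (simp add: reducible_Un)
  moreover have "intervals_length (Is1 @ Js2) \<le> intervals_length (uv # Is) / (1 + 2 * c) + \<eta>"
    using Is1(3) Js2(3) \<open>2 / K \<le> \<eta> / 2\<close> uv by (simp add: add_divide_distrib)
  ultimately show ?case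
    using Is1(1) Js2(1) \<open>N \<le> K\<close> \<open>K \<le> L\<close> \<open>L \<le> M\<close>
    by (intro exI[of _ M] conjI exI[of _ "Is1 @ Js2"]) auto
qed

lemma intervals_reducible_iterate:
  assumes c: "0 < c" "c \<le> 1 / 2" and "intervals_in_unit Is" "0 < \<eta>"
  shows "\<exists>M \<ge> N. \<exists>Js. intervals_in_unit Js \<and>
    intervals_length Js \<le> intervals_length Is / (1 + 2 * c) ^ k + \<eta> \<and>
    reducible c N M (intervals_union Is) (intervals_union Js)"
  using assms(3,4)
proof (induction k arbitrary: N Is \<eta>)
  case 0
  then show ?case by (intro exI[of _ N] conjI exI[of _ Is]) (simp_all add: reducible_subset)
next
  case (Suc k)
  obtain K Is1 where "N \<le> K" and Is1: "intervals_in_unit Is1"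
      "reducible c N K (intervals_union Is) (intervals_union Is1)"
      "intervals_length Is1 \<le> intervals_length Is / (1 + 2 * c) + \<eta> / 2"
    using intervals_reducible[OF c Suc.prems(1), of "\<eta> / 2" N] Suc.prems(2) by auto
  obtain M Js where "K \<le> M" and Js: "intervals_in_unit Js"
      "reducible c K M (intervals_union Is1) (intervals_union Js)"
      "intervals_length Js \<le> intervals_length Is1 / (1 + 2 * c) ^ k + \<eta> / 2"
    using Suc.IH[OF Is1(1), of "\<eta> / 2" K] Suc.prems(2) by auto
  have "1 \<le> (1 + 2 * c) ^ k" using c by simp
  have "intervals_length Is1 / (1 + 2 * c) ^ k \<le>
      (intervals_length Is / (1 + 2 * c) + \<eta> / 2) / (1 + 2 * c) ^ k"
    using Is1(3) c by (intro divide_right_mono) auto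
  also have "\<dots> = intervals_length Is / (1 + 2 * c) ^ Suc k + (\<eta> / 2) / (1 + 2 * c) ^ k"
    by (simp add: add_divide_distrib mult.commute)
  also have "(\<eta> / 2) / (1 + 2 * c) ^ k \<le> \<eta> / 2"
    using \<open>1 \<le> (1 + 2 * c) ^ k\<close> Suc.prems(2) by (simp add: divide_le_eq mult_le_cancel_left1)
  finally have "intervals_length Js \<le> intervals_length Is / (1 + 2 * c) ^ Suc k + \<eta>"
    using Js(3) by linarith
  moreover have "reducible c N M (intervals_union Is) (intervals_union Js)"
    using Is1(2) Js(2) \<open>N \<le> K\<close> \<open>K \<le> M\<close> by (rule reducible_trans)
  ultimately show ?case
    using Js(1) \<open>N \<le> K\<close> \<open>K \<le> M\<close> by (intro exI[of _ M] conjI exI[of _ Js]) auto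
qed

lemma unit_interval_reducible:
  assumes c: "0 < c" "c \<le> 1 / 2" and "0 < \<epsilon>"
  shows "\<exists>M > N. \<exists>T \<in> lmeasurable. measure lebesgue T \<le> \<epsilon> \<and> reducible c N M {0..1} T"
proof -
  obtain k where "2 / \<epsilon> < (1 + 2 * c) ^ k" using real_arch_pow[of "1 + 2 * c"] c by auto
  then have "1 / (1 + 2 * c) ^ k \<le> \<epsilon> / 2" using \<open>0 < \<epsilon>\<close> c by (simp add: field_simps)
  obtain M Js where "N \<le> M" "intervals_in_unit Js" and red: "reducible c N M {0..1} (intervals_union Js)"
      and "intervals_length Js \<le> 1 / (1 + 2 * c) ^ k + \<epsilon> / 2"
    using intervals_reducible_iterate[OF c, of "[(0, 1)]" "\<epsilon> / 2" N k] \<open>0 < \<epsilon>\<close> by auto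
  moreover have "intervals_union Js \<in> lmeasurable"
    "measure lebesgue (intervals_union Js) \<le> intervals_length Js"
    using intervals_union_lmeasurable[of Js] \<open>intervals_in_unit Js\<close>
    by (auto simp: intervals_in_unit_def)
  moreover have "reducible c N (Suc M) {0..1} (intervals_union Js)"
    by (rule reducible_mono[OF red]) auto
  ultimately show ?thesis
    using \<open>1 / (1 + 2 * c) ^ k \<le> \<epsilon> / 2\<close> \<open>N \<le> M\<close>
    by (intro exI[of _ "Suc M"] conjI bexI[of _ "intervals_union Js"]) auto
qed

lemma Least_strict_mono_block:
  assumes "strict_mono (f :: nat \<Rightarrow> nat)" "f r \<le> p" "p < f (Suc r)"
  shows "(LEAST s. p < f (Suc s)) = r"
proof (rule Least_equality)
  show "p < f (Suc r)" by fact
next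
  fix s assume "p < f (Suc s)"
  show "r \<le> s"
  proof (rule ccontr)
    assume "\<not> r \<le> s"
    then have "f (Suc s) \<le> f r" using assms(1) by (simp add: strict_mono_less_eq)
    with \<open>p < f (Suc s)\<close> assms(2) show False by simp
  qed
qed

lemma admissible_covering_blocks:
  assumes c: "0 < c" "c \<le> 1 / 2"
  obtains a where "admissible a"
    and "\<And>B \<epsilon>. 0 < \<epsilon> \<Longrightarrow>
      \<exists>N \<ge> B. \<exists>M. \<exists>T \<in> lmeasurable. measure lebesgue T \<le> \<epsilon> \<and> {0..1} - covered c a N M \<subseteq> T"
proof -
  define good where "good r N M a T \<longleftrightarrow> admissible a \<and> T \<in> lmeasurable \<and>
    measure lebesgue T \<le> 1 / Suc r \<and> {0..1} - covered c a N M \<subseteq> T" for r N M a T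
  have "\<exists>M > N. \<exists>a T. good r N M a T" for r N
  proof -
    obtain M T where "N < M" "T \<in> lmeasurable" "measure lebesgue T \<le> 1 / Suc r"
      and "reducible c N M {0..1} T"
      using unit_interval_reducible[OF c, of "1 / Suc r" N] by auto
    then show ?thesis unfolding good_def reducible_def by blast
  qed
  then obtain Ns where "\<And>r. Ns r < Ns (Suc r) \<and> (\<exists>a T. good r (Ns r) (Ns (Suc r)) a T)"
    using dependent_nat_choice[of "\<lambda>_ _. True" "\<lambda>r N M. N < M \<and> (\<exists>a T. good r N M a T)"] by blast
  then have Ns: "\<And>r. Ns r < Ns (Suc r)" and "\<forall>r. \<exists>a T. good r (Ns r) (Ns (Suc r)) a T"
    by blast+
  then obtain A T where good: "\<And>r. good r (Ns r) (Ns (Suc r)) (A r) (T r)"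
    by metis
  have mono: "strict_mono Ns" using Ns by (simp add: strict_mono_Suc_iff)
  define a where "a p = A (LEAST r. p < Ns (Suc r)) p" for p
  have "admissible a" using good by (simp add: good_def admissible_def a_def)
  moreover have "\<exists>N \<ge> B. \<exists>M. \<exists>T \<in> lmeasurable.
      measure lebesgue T \<le> \<epsilon> \<and> {0..1} - covered c a N M \<subseteq> T" if "0 < \<epsilon>" for B \<epsilon>
  proof -
    obtain n :: nat where "1 / \<epsilon> < n" using reals_Archimedean2 by blast
    define r where "r = max B n"
    have "real n \<le> real (Suc r)" by (simp add: r_def)
    then have "1 / \<epsilon> < real (Suc r)" using \<open>1 / \<epsilon> < n\<close> by linarith
    then have "1 / real (Suc r) < \<epsilon>"
      using \<open>0 < \<epsilon>\<close> by (simp add: divide_less_eq mult.commute)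
    moreover have "B \<le> Ns r" using strict_mono_imp_increasing[OF mono, of r] by (simp add: r_def)
    moreover have "covered c a (Ns r) (Ns (Suc r)) = covered c (A r) (Ns r) (Ns (Suc r))"
      by (rule covered_cong) (simp add: a_def Least_strict_mono_block[OF mono])
    ultimately show ?thesis
      using good[of r] unfolding good_def
      by (intro exI[of _ "Ns r"] conjI exI[of _ "Ns (Suc r)"] bexI[of _ "T r"]) auto
  qed
  ultimately show ?thesis using that by blast
qed

lemma AE_infinitely_covered:
  assumes "\<And>B \<epsilon>. 0 < \<epsilon> \<Longrightarrow> \<exists>N \<ge> B. \<exists>M. \<exists>T \<in> lmeasurable.
    measure lebesgue T \<le> \<epsilon> \<and> {0..1} - covered c a N M \<subseteq> T"
  shows "AE x in lborel. x \<in> {0..1} \<longrightarrow>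
    infinite {p. prime p \<and> \<bar>x - real_of_int (a p) / real p\<bar> \<le> c / real p}"
proof -
  define hits where "hits x = {p. prime p \<and> \<bar>x - real_of_int (a p) / real p\<bar> \<le> c / real p}"
    for x
  define E where "E B = (\<Inter>M. {0..1} - covered c a B M)" for B
  have E_subset: "E B \<subseteq> {0..1} - covered c a N M" if "B \<le> N" for B N M
    using covered_mono[OF that order_refl, of c a M] by (auto simp: E_def)
  have "negligible (E B)" for B
    unfolding negligible_outer_le
  proof (intro allI impI)
    fix \<epsilon> :: real assume "0 < \<epsilon>"
    then obtain N M T where "B \<le> N" "T \<in> lmeasurable" "measure lebesgue T \<le> \<epsilon>"
      and "{0..1} - covered c a N M \<subseteq> T"
      using assms[of \<epsilon> B] by blast
    then show "\<exists>T. E B \<subseteq> T \<and> T \<in> lmeasurable \<and> measure lebesgue T \<le> \<epsilon>"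
      using E_subset[of B N M] by blast
  qed
  then have "negligible (\<Union>B. E B)" by (rule negligible_Union_nat)
  moreover have "{x. \<not> (x \<in> {0..1} \<longrightarrow> infinite (hits x))} \<subseteq> (\<Union>B. E B)"
  proof
    fix x assume "x \<in> {x. \<not> (x \<in> {0..1} \<longrightarrow> infinite (hits x))}"
    then obtain B where "x \<in> {0..1}" "hits x \<subseteq> {..<B}" using finite_nat_bounded by auto
    then have "x \<in> E B" by (auto simp: E_def hits_def covered_def subset_iff)
    then show "x \<in> (\<Union>B. E B)" by blast
  qed
  ultimately have "AE x in lebesgue. x \<in> {0..1} \<longrightarrow> infinite (hits x)"
    unfolding eventually_ae_filter_negligible by blast
  then show ?thesis by (simp add: AE_completion_iff hits_def)
qed

theorem theorem1p1:
  fixes c :: real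
  assumes "0 < c" and "c \<le> 1/2"
  shows "\<exists>a :: nat \<Rightarrow> int. (\<forall>p. prime p \<longrightarrow> 0 \<le> a p \<and> a p < int p) \<and>
           (AE x in lborel. x \<in> {0..1} \<longrightarrow>
              infinite {p :: nat. prime p \<and> \<bar>x - real_of_int (a p) / real p\<bar> \<le> c / real p})"
proof -
  obtain a where "admissible a"
    and blocks: "\<And>B \<epsilon>. 0 < \<epsilon> \<Longrightarrow>
      \<exists>N \<ge> B. \<exists>M. \<exists>T \<in> lmeasurable. measure lebesgue T \<le> \<epsilon> \<and> {0..1} - covered c a N M \<subseteq> T"
    using admissible_covering_blocks[OF assms] by blast
  then show ?thesis using AE_infinitely_covered[OF blocks] unfolding admissible_def by blast
qed

end
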